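(* Let $k$ be an algebraically closed field of positive characteristic and $n\geq1$. Then the action of $\mathrm{SO}_{2n+1}(k)$ on $\mathrm{Q}_{2n}(k)$ described in the context is transitive.
   Context: $\mathrm{Q}_{2n}$ is realized as the closed subscheme of $\mathbb{A}^{2n+2}_k$ given by $q_{2n+2}=0$ and $t_{2n+2}=1$, where $q_{2n+2}=\sum_{i=1}^{n+1}x_ix_{n+1+i}$, $t_{2n+2}(x)=x_{n+1}+x_{2n+2}=B(x,1)$ with $B$ the polar bilinear form of $q_{2n+2}$ and $1$ the vector with $x_{n+1}=x_{2n+2}=1$, other coordinates $0$ (this scheme is isomorphic to the hypersurface $\sum_{i=1}^nx_ix_{n+i}=x_{2n+1}(1-x_{2n+1})$ in $\mathbb{A}^{2n+1}_k$). The group $\mathrm{SO}_{2n+1}$ (kernel of the determinant on the orthogonal group scheme $\mathrm{O}_{2n+1}$ of $q_{2n+1}=\sum_{i=1}^nx_ix_{n+i}+x_{2n+1}^2$) acts on $\mathbb{A}^{2n+2}_k$ via the identification of $\mathrm{O}_{2n+1}$ with the stabilizer of $1$ in $\mathrm{GSO}_{2n+2}$ (the subgroup of similitudes of $q_{2n+2}$ generated by scalars and $\mathrm{SO}_{2n+2}$), using the embedding $(x_1,\dots,x_{2n+1})\mapsto(x_1,\dots,x_n,x_{2n+1},x_{n+1},\dots,x_{2n},x_{2n+1})$; this action preserves $q_{2n+2}$ and $t_{2n+2}$, hence $\mathrm{Q}_{2n}$. *)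

theory Defs
  imports "HOL-Computational_Algebra.Polynomial" "Jordan_Normal_Form.DL_Rank"
begin

text \<open>Coordinates x_1,...,x_{2n+2} of A^{2n+2} are indexed 0,...,2n+1.\<close>

definition q2 :: "nat \<Rightarrow> 'k::field vec \<Rightarrow> 'k" where
  "q2 n y = (\<Sum>i<n+1. y $ i * y $ (n + 1 + i))"

definition B2 :: "nat \<Rightarrow> 'k::field vec \<Rightarrow> 'k vec \<Rightarrow> 'k" where
  "B2 n y z = q2 n (y + z) - q2 n y - q2 n z"

definition one_vec :: "nat \<Rightarrow> 'k::field vec" where
  "one_vec n = vec (2*n+2) (\<lambda>i. if i = n \<or> i = 2*n+1 then 1 else 0)"

text \<open>t_{2n+2}(y) = y_{n+1} + y_{2n+2} = B(y,1).\<close>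
definition t2 :: "nat \<Rightarrow> 'k::field vec \<Rightarrow> 'k" where
  "t2 n y = y $ n + y $ (2*n+1)"

definition Q_points :: "nat \<Rightarrow> 'k::field vec set" where
  "Q_points n = {y \<in> carrier_vec (2*n+2). q2 n y = 0 \<and> t2 n y = 1}"

definition O_points :: "nat \<Rightarrow> 'k::field mat set" where
  "O_points n = {h \<in> carrier_mat (2*n+2) (2*n+2).
      \<forall>y \<in> carrier_vec (2*n+2). q2 n (h *\<^sub>v y) = q2 n y}"

text \<open>Dickson invariant of an orthogonal transformation h (over a field):
  rank(1 - h) mod 2.  In characteristic not 2 it corresponds to det h = (-1)^{rank(1-h)}.\<close>
definition dickson :: "nat \<Rightarrow> 'k::field mat \<Rightarrow> nat" where
  "dickson n h = vec_space.rank (2*n+2) (1\<^sub>m (2*n+2) - h) mod 2"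

definition SO_points :: "nat \<Rightarrow> 'k::field mat set" where
  "SO_points n = {h \<in> O_points n. dickson n h = 0}"

text \<open>k-points of GSO_{2n+2}: the group of similitudes generated by the (invertible)
  scalars and SO_{2n+2}; since scalars are central this is {c h}.\<close>
definition GSO_points :: "nat \<Rightarrow> 'k::field mat set" where
  "GSO_points n = {c \<cdot>\<^sub>m h | c h. c \<noteq> 0 \<and> h \<in> SO_points n}"

text \<open>The k-points of O_{2n+1} = SO_{2n+1} (char 2), resp. the image of SO_{2n+1}(k),
  acting on A^{2n+2}: the stabilizer of 1 in GSO_{2n+2}(k).\<close>
definition Stab_one :: "nat \<Rightarrow> 'k::field mat set" where
  "Stab_one n = {h \<in> GSO_points n. h *\<^sub>v one_vec n = one_vec n}"

end

theory Submission
  imports Defs "Jordan_Normal_Form.DL_Rank_Submatrix"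
begin

text \<open>
  Given y \<noteq> y' in Q_points n, pick z \<in> Q_points n with B(y,z) \<noteq> 0 and B(y',z) \<noteq> 0. Then
  a = y - z and b = z - y' are anisotropic (q(a) = -B(y,z)) and orthogonal to 1 (as
  t(y) = t(z) = t(y') = 1); the reflection in a sends y to z and the reflection in b sends z
  to y'. Their product h is orthogonal, fixes 1, and 1 - h has rank 2 because a and b are not
  proportional, so the Dickson invariant of h vanishes. A suitable z lies on a polynomial
  curve in Q_points n along which B(y,-) and B(y',-) are nonzero polynomials; over an
  algebraically closed field their product has a non-root.
\<close>

lemma sum_lessThan_double:
  "(\<Sum>j<2*(m::nat). f j) = (\<Sum>i<m. f i) + (\<Sum>i<m. f (m + i) :: 'a::comm_monoid_add)"
proof -
  have "(\<Sum>j<2*m. f j) = (\<Sum>j\<in>{0..<m}. f j) + (\<Sum>j\<in>{m..<m+m}. f j)"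
    by (simp add: lessThan_atLeast0 mult_2 sum.atLeastLessThan_concat)
  also have "(\<Sum>j\<in>{m..<m+m}. f j) = (\<Sum>i\<in>{0..<m}. f (i + m))"
    using sum.shift_bounds_nat_ivl[of f 0 m m] by simp
  finally show ?thesis by (simp add: lessThan_atLeast0 add.commute)
qed

lemma sum_lessThan_Suc_supported_0_last:
  assumes "(n::nat) \<ge> 1" and "\<And>i. i < n \<Longrightarrow> i \<noteq> 0 \<Longrightarrow> f i = 0"
  shows "(\<Sum>i<n+1. f i) = f 0 + (f n :: 'a::comm_monoid_add)"
proof -
  have "(\<Sum>i<n+1. f i) = (\<Sum>i\<in>{0, n}. f i)"
    by (rule sum.mono_neutral_right) (use assms in auto)
  then show ?thesis
    using assms(1) by simp
qed

lemma det_2x2: "A \<in> carrier_mat 2 2 \<Longrightarrow> det A = A$$(0,0) * A$$(1,1) - A$$(0,1) * A$$(1,0)"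
  by (simp add: laplace_expansion_column[of A 2 0] cofactor_def det_single mat_delete_def
      numeral_2_eq_2 lessThan_Suc)

lemma pick_doubleton:
  assumes "(i::nat) < i'"
  shows "pick {i, i'} 0 = i" "pick {i, i'} (Suc 0) = i'"
proof -
  show first: "pick {i, i'} 0 = i"
    using assms unfolding pick.simps by (auto intro!: Least_equality)
  show "pick {i, i'} (Suc 0) = i'"
    using assms unfolding pick.simps(2) first by (auto intro!: Least_equality)
qed

lemma rank_ge_2_of_minor:
  fixes A :: "'a::field mat"
  assumes A: "A \<in> carrier_mat m nc"
    and "i \<noteq> i'" "i < m" "i' < m" "j \<noteq> j'" "j < nc" "j' < nc"
    and "A$$(i,j) * A$$(i',j') - A$$(i,j') * A$$(i',j) \<noteq> 0"
  shows "2 \<le> vec_space.rank m A"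
proof -
  have ordered: "2 \<le> vec_space.rank m A"
    if "r < r'" "r' < m" "c < c'" "c' < nc"
      and minor: "A$$(r,c) * A$$(r',c') - A$$(r,c') * A$$(r',c) \<noteq> 0" for r r' c c'
  proof -
    have rows: "{p. p < dim_row A \<and> p \<in> {r, r'}} = {r, r'}"
      and cols: "{q. q < dim_col A \<and> q \<in> {c, c'}} = {c, c'}"
      using A that by auto
    have "submatrix A {r, r'} {c, c'} = mat 2 2 (\<lambda>(p, q). A $$ (pick {r, r'} p, pick {c, c'} q))"
      unfolding submatrix_def rows cols using that by (simp add: numeral_2_eq_2)
    then have "det (submatrix A {r, r'} {c, c'}) = A$$(r,c) * A$$(r',c') - A$$(r,c') * A$$(r',c)"
      by (simp add: det_2x2 pick_doubleton[OF \<open>r < r'\<close>] pick_doubleton[OF \<open>c < c'\<close>] del: pick.simps)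
    with minor have "card {q. q < nc \<and> q \<in> {c, c'}} \<le> vec_space.rank m A"
      by (intro vec_space.rank_gt_minor[OF A, of "{r, r'}"]) simp
    moreover have "{q. q < nc \<and> q \<in> {c, c'}} = {c, c'}"
      using that by auto
    ultimately show ?thesis
      using \<open>c < c'\<close> by simp
  qed
  from assms show ?thesis
    by (cases i i' rule: linorder_cases; cases j j' rule: linorder_cases)
      (auto intro: ordered simp: algebra_simps)
qed

lemma rank_le_2_of_sum_of_products:
  fixes u w f g :: "nat \<Rightarrow> 'a::field"
  shows "vec_space.rank m (mat m nc (\<lambda>(i, j). u i * f j + w i * g j)) \<le> 2"
proof -
  define U where "U = mat m nc (\<lambda>(i, j). u i * f j)"
  define W where "W = mat m nc (\<lambda>(i, j). w i * g j)"
  have carrier: "U \<in> carrier_mat m nc" "W \<in> carrier_mat m nc"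
    unfolding U_def W_def by auto
  have "vec_space.rank m U \<le> 1"
    by (rule vec_space.rank_le_1_product_entries[OF carrier(1), of u f]) (simp add: U_def)
  moreover have "vec_space.rank m W \<le> 1"
    by (rule vec_space.rank_le_1_product_entries[OF carrier(2), of w g]) (simp add: W_def)
  moreover have "mat m nc (\<lambda>(i, j). u i * f j + w i * g j) = U + W"
    unfolding U_def W_def by (rule eq_matI) auto
  ultimately show ?thesis
    using vec_space.rank_subadditive[OF carrier] by simp
qed

lemma exists_nonzero_minor:
  fixes a b :: "'k::field vec"
  assumes a: "a \<in> carrier_vec m" and b: "b \<in> carrier_vec m"
    and "a \<noteq> 0\<^sub>v m" and not_parallel: "\<And>c. b \<noteq> c \<cdot>\<^sub>v a"
  shows "\<exists>i1 i2. i1 \<noteq> i2 \<and> i1 < m \<and> i2 < m \<and> a$i1 * b$i2 - a$i2 * b$i1 \<noteq> 0"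
proof (rule ccontr)
  assume "\<not> ?thesis"
  then have minors: "a$i * b$j = a$j * b$i" if "i < m" "j < m" for i j
    using that by (cases "i = j") auto
  obtain i where i: "i < m" "a$i \<noteq> 0"
    using a \<open>a \<noteq> 0\<^sub>v m\<close> by (auto simp: vec_eq_iff)
  have "b = (b$i / a$i) \<cdot>\<^sub>v a"
  proof (rule eq_vecI)
    fix j assume "j < dim_vec ((b$i / a$i) \<cdot>\<^sub>v a)"
    then have "j < m" using a by simp
    then show "b$j = ((b$i / a$i) \<cdot>\<^sub>v a) $ j"
      using minors[OF i(1), of j] i a by (simp add: field_simps)
  qed (use a b in simp)
  with not_parallel show False by blast
qed

lemma alg_closed_exists_nonroot:
  fixes p :: "'k::alg_closed_field poly"
  assumes "p \<noteq> 0"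
  shows "\<exists>c. poly p c \<noteq> 0"
proof (cases "degree p = 0")
  case True
  then obtain a where "p = [:a:]"
    by (rule degree_eq_zeroE)
  with assms show ?thesis
    by auto
next
  case False
  then have "degree (p + [:-1:]) > 0"
    by (simp add: degree_add_eq_left)
  then obtain c where "poly (p + [:-1:]) c = 0"
    using alg_closed_imp_poly_has_root by blast
  then have "poly p c = 1"
    by simp
  then show ?thesis
    by (metis one_neq_zero)
qed

text \<open>The polar form of q2 (it agrees with B2 on carrier_vec (2*n+2)), written out so that
  symmetry and linearity need no hypotheses on dimensions.\<close>
definition polar :: "nat \<Rightarrow> 'k::field vec \<Rightarrow> 'k vec \<Rightarrow> 'k" where
  "polar n x y = (\<Sum>i<n+1. x $ i * y $ (n + 1 + i) + y $ i * x $ (n + 1 + i))"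

lemma polar_sym: "polar n x y = polar n y x"
  unfolding polar_def by (intro sum.cong) (auto simp: mult.commute)

lemma polar_self: "polar n x x = 2 * q2 n x"
  unfolding polar_def q2_def sum_distrib_left by (intro sum.cong) (auto simp: mult.commute)

lemma polar_diff:
  assumes "x \<in> carrier_vec (2*n+2)" "y \<in> carrier_vec (2*n+2)"
  shows "polar n (x - y) w = polar n x w - polar n y w"
  unfolding polar_def sum_subtractf[symmetric] using assms
  by (intro sum.cong) (auto simp: algebra_simps)

lemma polar_smult:
  assumes "x \<in> carrier_vec (2*n+2)"
  shows "polar n (c \<cdot>\<^sub>v x) w = c * polar n x w"
  unfolding polar_def sum_distrib_left using assms by (intro sum.cong) (auto simp: algebra_simps)

lemma q2_smult:
  assumes "x \<in> carrier_vec (2*n+2)"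
  shows "q2 n (c \<cdot>\<^sub>v x) = c^2 * q2 n x"
  unfolding q2_def sum_distrib_left using assms
  by (intro sum.cong) (auto simp: algebra_simps power2_eq_square)

lemma q2_diff:
  assumes "x \<in> carrier_vec (2*n+2)" "y \<in> carrier_vec (2*n+2)"
  shows "q2 n (x - y) = q2 n x + q2 n y - polar n x y"
  unfolding q2_def polar_def sum_subtractf[symmetric] sum.distrib[symmetric] using assms
  by (intro sum.cong) (auto simp: algebra_simps)

lemma q2_zero_vec: "q2 n (0\<^sub>v (2*n+2) :: 'k::field vec) = 0"
  unfolding q2_def by (intro sum.neutral) auto

lemma polar_one_vec: "polar n y (one_vec n) = t2 n y"
proof -
  have "polar n y (one_vec n) = (\<Sum>i<n+1. if i = n then y $ n + y $ (2*n+1) else 0)"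
    unfolding polar_def by (intro sum.cong) (auto simp: one_vec_def mult_2)
  then show ?thesis
    unfolding t2_def sum.delta[OF finite_lessThan] by simp
qed

definition dual_index :: "nat \<Rightarrow> nat \<Rightarrow> nat" where
  "dual_index n j = (if j < n+1 then j + (n+1) else j - (n+1))"

lemma dual_index_less: "j < 2*n+2 \<Longrightarrow> dual_index n j < 2*n+2"
  unfolding dual_index_def by auto

lemma dual_index_dual_index: "j < 2*n+2 \<Longrightarrow> dual_index n (dual_index n j) = j"
  unfolding dual_index_def by auto

lemma polar_eq_sum_dual_index: "polar n x w = (\<Sum>j<2*n+2. x $ j * w $ dual_index n j)"
  using sum_lessThan_double[where m="n+1" and f="\<lambda>j. x $ j * w $ dual_index n j"]
  by (simp add: polar_def dual_index_def sum.distrib add.commute mult.commute)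

text \<open>In characteristic 2 this is the orthogonal transvection along v; it preserves q2 in
  every characteristic.\<close>
definition reflection :: "nat \<Rightarrow> 'k::field vec \<Rightarrow> 'k vec \<Rightarrow> 'k vec" where
  "reflection n v x = x - (polar n x v / q2 n v) \<cdot>\<^sub>v v"

lemma reflection_carrier:
  "x \<in> carrier_vec (2*n+2) \<Longrightarrow> v \<in> carrier_vec (2*n+2) \<Longrightarrow> reflection n v x \<in> carrier_vec (2*n+2)"
  unfolding reflection_def by auto

lemma q2_reflection:
  assumes "x \<in> carrier_vec (2*n+2)" "v \<in> carrier_vec (2*n+2)" "q2 n v \<noteq> 0"
  shows "q2 n (reflection n v x) = q2 n x"
proof -
  define t where "t = polar n x v / q2 n v"
  have "q2 n (reflection n v x) = q2 n x + t^2 * q2 n v - t * polar n x v"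
    unfolding reflection_def t_def[symmetric] using assms
    by (simp add: q2_diff q2_smult polar_sym[of n x] polar_smult)
  also have "t^2 * q2 n v = t * polar n x v"
    using assms(3) unfolding t_def by (simp add: power2_eq_square)
  finally show ?thesis by simp
qed

lemma polar_reflection:
  assumes "x \<in> carrier_vec (2*n+2)" "v \<in> carrier_vec (2*n+2)"
  shows "polar n (reflection n v x) w = polar n x w - polar n x v / q2 n v * polar n v w"
  unfolding reflection_def using assms by (simp add: polar_diff polar_smult)

lemma reflection_fixed:
  assumes "x \<in> carrier_vec (2*n+2)" "v \<in> carrier_vec (2*n+2)" "polar n x v = 0"
  shows "reflection n v x = x"
  unfolding reflection_def using assms by (intro eq_vecI) auto

lemma reflection_diff:
  assumes x: "x \<in> carrier_vec (2*n+2)" and x': "x' \<in> carrier_vec (2*n+2)"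
    and "q2 n x = q2 n x'" and anisotropic: "q2 n (x - x') \<noteq> 0"
  shows "reflection n (x - x') x = x'"
proof -
  have "polar n x (x - x') = q2 n (x - x')"
    using assms by (simp add: polar_sym[of n x] polar_diff polar_self q2_diff)
  then have "polar n x (x - x') / q2 n (x - x') = 1"
    using anisotropic by simp
  then show ?thesis
    unfolding reflection_def using x x' by (intro eq_vecI) auto
qed

text \<open>The matrix of reflection n b \<circ> reflection n a, as the identity minus two rank-one
  matrices.\<close>
definition double_reflection_mat :: "nat \<Rightarrow> 'k::field vec \<Rightarrow> 'k vec \<Rightarrow> 'k mat" where
  "double_reflection_mat n a b = 1\<^sub>m (2*n+2) - mat (2*n+2) (2*n+2) (\<lambda>(i, j).
     a$i * (a $ dual_index n j / q2 n a)
     + b$i * (b $ dual_index n j / q2 n b - polar n a b / (q2 n a * q2 n b) * a $ dual_index n j))"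

lemma double_reflection_mat_carrier:
  "double_reflection_mat n a b \<in> carrier_mat (2*n+2) (2*n+2)"
  unfolding double_reflection_mat_def by (intro minus_carrier_mat mat_carrier)

lemma double_reflection_mat_mult_vec:
  assumes a: "a \<in> carrier_vec (2*n+2)" and b: "b \<in> carrier_vec (2*n+2)"
    and x: "x \<in> carrier_vec (2*n+2)"
  shows "double_reflection_mat n a b *\<^sub>v x = reflection n b (reflection n a x)"
proof (rule eq_vecI)
  fix i assume "i < dim_vec (reflection n b (reflection n a x))"
  then have i: "i < 2*n+2"
    using a b x by (simp add: reflection_def)
  define s where "s = polar n x a / q2 n a"
  define k where "k = polar n a b / (q2 n a * q2 n b)"
  define t where "t = polar n x b / q2 n b - k * polar n x a"
  have "(double_reflection_mat n a b *\<^sub>v x) $ i = (\<Sum>j<2*n+2. ((if i = j then 1 else 0)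
      - (a$i * (a $ dual_index n j / q2 n a) + b$i * (b $ dual_index n j / q2 n b - k * a $ dual_index n j)))
      * x $ j)"
    using i x by (simp add: double_reflection_mat_def scalar_prod_def lessThan_atLeast0 k_def)
  also have "\<dots> = (\<Sum>j<2*n+2. (if i = j then x $ j else 0))
        - a$i / q2 n a * (\<Sum>j<2*n+2. x $ j * a $ dual_index n j)
        - b$i / q2 n b * (\<Sum>j<2*n+2. x $ j * b $ dual_index n j)
        + b$i * k * (\<Sum>j<2*n+2. x $ j * a $ dual_index n j)"
    unfolding sum_distrib_left sum_subtractf[symmetric] sum.distrib[symmetric]
    by (intro sum.cong) (auto simp: algebra_simps)
  also have "\<dots> = x $ i - s * a $ i - t * b $ i"
    unfolding polar_eq_sum_dual_index[symmetric] sum.delta'[OF finite_lessThan]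
    using i by (simp add: s_def t_def algebra_simps)
  also have "\<dots> = reflection n b (reflection n a x) $ i"
  proof -
    have "polar n (reflection n a x) b / q2 n b = t"
      by (simp add: polar_reflection[OF x a] t_def k_def s_def diff_divide_distrib polar_sym[of n a b])
    moreover have "reflection n a x $ i = x $ i - s * a $ i"
      using i a x by (simp add: reflection_def s_def)
    ultimately show ?thesis
      using i b reflection_carrier[OF x a] by (simp add: reflection_def[of n b])
  qed
  finally show "(double_reflection_mat n a b *\<^sub>v x) $ i = reflection n b (reflection n a x) $ i" .
qed (use a b x in \<open>simp add: double_reflection_mat_def reflection_def\<close>)

lemma rank_one_minus_double_reflection_mat:
  fixes a b :: "'k::field vec"
  assumes "q2 n a \<noteq> 0" "q2 n b \<noteq> 0"
    and i: "i1 \<noteq> i2" "i1 < 2*n+2" "i2 < 2*n+2" and minor: "a$i1 * b$i2 - a$i2 * b$i1 \<noteq> 0"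
  shows "vec_space.rank (2*n+2) (1\<^sub>m (2*n+2) - double_reflection_mat n a b) = 2"
proof -
  define k where "k = polar n a b / (q2 n a * q2 n b)"
  define M where "M = mat (2*n+2) (2*n+2) (\<lambda>(i, j).
    a$i * (a $ dual_index n j / q2 n a) + b$i * (b $ dual_index n j / q2 n b - k * a $ dual_index n j))"
  have M_carrier: "M \<in> carrier_mat (2*n+2) (2*n+2)"
    unfolding M_def by simp
  have "1\<^sub>m (2*n+2) - double_reflection_mat n a b = M"
    unfolding double_reflection_mat_def M_def k_def by (rule eq_matI) auto
  moreover have "vec_space.rank (2*n+2) M \<le> 2"
    unfolding M_def by (rule rank_le_2_of_sum_of_products)
  moreover have "2 \<le> vec_space.rank (2*n+2) M"
  proof (rule rank_ge_2_of_minor[OF M_carrier i, where j = "dual_index n i1" and j' = "dual_index n i2"])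
    have entry: "M $$ (i, dual_index n j) = a$i * (a$j / q2 n a) + b$i * (b$j / q2 n b - k * a$j)"
      if "i < 2*n+2" "j < 2*n+2" for i j
      unfolding M_def index_mat(1)[OF that(1) dual_index_less[OF that(2)]]
      by (simp add: dual_index_dual_index[OF that(2)])
    have "M $$ (i1, dual_index n i1) * M $$ (i2, dual_index n i2)
      - M $$ (i1, dual_index n i2) * M $$ (i2, dual_index n i1)
      = (a$i1 * b$i2 - a$i2 * b$i1)^2 / (q2 n a * q2 n b)"
      unfolding entry[OF i(2) i(2)] entry[OF i(2) i(3)] entry[OF i(3) i(2)] entry[OF i(3) i(3)]
      using assms(1,2) by (simp add: field_simps power2_eq_square)
    then show "M $$ (i1, dual_index n i1) * M $$ (i2, dual_index n i2)
      - M $$ (i1, dual_index n i2) * M $$ (i2, dual_index n i1) \<noteq> 0"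
      using assms by simp
  qed (use i dual_index_less dual_index_dual_index in metis)+
  ultimately show ?thesis by simp
qed

lemma Stab_one_memI:
  fixes h :: "'k::field mat"
  assumes "h \<in> carrier_mat (2*n+2) (2*n+2)"
    and "\<And>x. x \<in> carrier_vec (2*n+2) \<Longrightarrow> q2 n (h *\<^sub>v x) = q2 n x"
    and "even (vec_space.rank (2*n+2) (1\<^sub>m (2*n+2) - h))"
    and "h *\<^sub>v one_vec n = one_vec n"
  shows "h \<in> Stab_one n"
proof -
  have "h \<in> SO_points n"
    using assms unfolding SO_points_def O_points_def dickson_def by auto
  moreover have "h = 1 \<cdot>\<^sub>m h"
    by (rule eq_matI) auto
  ultimately show ?thesis
    using assms(4) unfolding Stab_one_def GSO_points_def by force
qed

lemma one_mat_in_Stab_one: "(1\<^sub>m (2*n+2) :: 'k::field mat) \<in> Stab_one n"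
proof (rule Stab_one_memI)
  have zero: "1\<^sub>m (2*n+2) - 1\<^sub>m (2*n+2) = (0\<^sub>m (2*n+2) (2*n+2) :: 'k mat)"
    by (rule eq_matI) auto
  show "even (vec_space.rank (2*n+2) (1\<^sub>m (2*n+2) - 1\<^sub>m (2*n+2) :: 'k mat))"
    unfolding zero vec_space.rank_0I by simp
qed (auto simp: one_vec_def)

lemma double_reflection_mat_in_Stab_one:
  fixes a b :: "'k::field vec"
  assumes a: "a \<in> carrier_vec (2*n+2)" and b: "b \<in> carrier_vec (2*n+2)"
    and qa: "q2 n a \<noteq> 0" and qb: "q2 n b \<noteq> 0"
    and a_one: "polar n (one_vec n) a = 0" and b_one: "polar n (one_vec n) b = 0"
    and not_parallel: "\<And>c. b \<noteq> c \<cdot>\<^sub>v a"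
  shows "double_reflection_mat n a b \<in> Stab_one n"
proof (rule Stab_one_memI[OF double_reflection_mat_carrier])
  fix x :: "'k vec"
  assume x: "x \<in> carrier_vec (2*n+2)"
  show "q2 n (double_reflection_mat n a b *\<^sub>v x) = q2 n x"
    unfolding double_reflection_mat_mult_vec[OF a b x]
    using q2_reflection[OF reflection_carrier[OF x a] b qb] q2_reflection[OF x a qa] by simp
next
  have "a \<noteq> 0\<^sub>v (2*n+2)"
    using qa q2_zero_vec by metis
  then obtain i1 i2 where "i1 \<noteq> i2" "i1 < 2*n+2" "i2 < 2*n+2" "a$i1 * b$i2 - a$i2 * b$i1 \<noteq> 0"
    using exists_nonzero_minor[OF a b _ not_parallel] by blast
  then show "even (vec_space.rank (2*n+2) (1\<^sub>m (2*n+2) - double_reflection_mat n a b))"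
    using rank_one_minus_double_reflection_mat[OF qa qb] by simp
next
  have one: "one_vec n \<in> carrier_vec (2*n+2)"
    by (simp add: one_vec_def)
  show "double_reflection_mat n a b *\<^sub>v one_vec n = one_vec n"
    unfolding double_reflection_mat_mult_vec[OF a b one]
    using reflection_fixed[OF one a a_one] reflection_fixed[OF one b b_one] by simp
qed

text \<open>Its coefficient vectors span these coordinates, in particular one_vec n, so
  B(w,-) is a nonzero polynomial along the curve whenever t2 n w \<noteq> 0.\<close>
definition Q_curve :: "nat \<Rightarrow> 'k::field \<Rightarrow> 'k vec" where
  "Q_curve n c = vec (2*n+2) (\<lambda>j. if j = 0 then c + c^3 else if j = n then 1 + c^2
     else if j = n+1 then c else if j = 2*n+1 then - (c^2) else 0)"

lemma Q_curve_in_Q_points: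
  assumes "n \<ge> 1"
  shows "Q_curve n c \<in> Q_points n"
proof -
  have "q2 n (Q_curve n c) = (c + c^3) * c + (1 + c^2) * - (c^2)"
    unfolding q2_def using assms
    by (subst sum_lessThan_Suc_supported_0_last) (auto simp: Q_curve_def mult_2)
  moreover have "t2 n (Q_curve n c) = 1"
    using assms by (simp add: t2_def Q_curve_def)
  ultimately show ?thesis
    unfolding Q_points_def Q_curve_def by (simp add: algebra_simps power2_eq_square power3_eq_cube)
qed

lemma polar_Q_curve:
  assumes "n \<ge> 1"
  shows "polar n w (Q_curve n c)
    = poly [: w $ (2*n+1), w $ 0 + w $ (n+1), w $ (2*n+1) - w $ n, w $ (n+1) :] c"
proof -
  have "polar n w (Q_curve n c) = (w $ 0 * c + (c + c^3) * w $ (n+1))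
      + (w $ n * - (c^2) + (1 + c^2) * w $ (2*n+1))"
    unfolding polar_def using assms
    by (subst sum_lessThan_Suc_supported_0_last) (auto simp: Q_curve_def mult_2)
  then show ?thesis
    by (simp add: algebra_simps power2_eq_square power3_eq_cube)
qed

lemma exists_Q_point_polar_nonzero:
  fixes y y' :: "'k::alg_closed_field vec"
  assumes "n \<ge> 1" and "t2 n y = 1" and "t2 n y' = 1"
  shows "\<exists>z \<in> Q_points n. polar n y z \<noteq> 0 \<and> polar n y' z \<noteq> 0"
proof -
  define P :: "'k vec \<Rightarrow> 'k poly" where
    "P w = [: w $ (2*n+1), w $ 0 + w $ (n+1), w $ (2*n+1) - w $ n, w $ (n+1) :]" for w
  have "P w \<noteq> 0" if "t2 n w = 1" for w
    using that by (auto simp: P_def t2_def)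
  with assms have "P y * P y' \<noteq> 0"
    by simp
  then obtain c where "poly (P y * P y') c \<noteq> 0"
    using alg_closed_exists_nonroot by blast
  moreover have "polar n w (Q_curve n c) = poly (P w) c" for w
    unfolding P_def by (rule polar_Q_curve[OF \<open>n \<ge> 1\<close>])
  ultimately show ?thesis
    using Q_curve_in_Q_points[OF \<open>n \<ge> 1\<close>] by (metis poly_mult mult_zero_left mult_zero_right)
qed

lemma Q_points_diffs_not_parallel:
  fixes y y' z :: "'k::field vec"
  assumes "y \<in> Q_points n" "y' \<in> Q_points n" "z \<in> Q_points n"
    and "y \<noteq> y'" and yz: "polar n y z \<noteq> 0" and y'z: "polar n y' z \<noteq> 0"
  shows "z - y' \<noteq> c \<cdot>\<^sub>v (y - z)"
proof
  assume parallel: "z - y' = c \<cdot>\<^sub>v (y - z)"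
  have y: "y \<in> carrier_vec (2*n+2)" "q2 n y = 0" and y': "y' \<in> carrier_vec (2*n+2)" "q2 n y' = 0"
    and z: "z \<in> carrier_vec (2*n+2)" "q2 n z = 0"
    using assms(1-3) by (auto simp: Q_points_def)
  have linear: "- polar n y' z = c * polar n y z"
    using arg_cong[OF parallel, of "\<lambda>v. polar n v z"] y y' z
    by (simp add: polar_diff polar_smult polar_self polar_sym[of n z])
  have quadratic: "- polar n y' z = c^2 * - polar n y z"
    using arg_cong[OF parallel, of "q2 n"] y y' z
    by (simp add: q2_diff q2_smult polar_sym[of n z])
  have "c * (c + 1) * polar n y z = c * polar n y z - c^2 * - polar n y z"
    by (simp add: algebra_simps power2_eq_square)
  also have "\<dots> = 0"
    using linear quadratic by simp
  finally have "c * (c + 1) * polar n y z = 0" .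
  moreover have "c \<noteq> 0"
    using linear y'z by auto
  ultimately have "c = -1"
    using yz
    by (simp add: add_eq_0_iff2)
  with parallel have "y' = y"
    using y y' z by (auto simp: vec_eq_iff)
  with \<open>y \<noteq> y'\<close> show False
    by simp
qed

lemma double_reflection_mat_connects_Q_points:
  fixes y y' z :: "'k::field vec"
  assumes yQ: "y \<in> Q_points n" and y'Q: "y' \<in> Q_points n" and zQ: "z \<in> Q_points n"
    and "y \<noteq> y'" and yz: "polar n y z \<noteq> 0" and y'z: "polar n y' z \<noteq> 0"
  shows "double_reflection_mat n (y - z) (z - y') \<in> Stab_one n"
    and "double_reflection_mat n (y - z) (z - y') *\<^sub>v y = y'"
proof -
  have y: "y \<in> carrier_vec (2*n+2)" "q2 n y = 0" "t2 n y = 1"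
    and y': "y' \<in> carrier_vec (2*n+2)" "q2 n y' = 0" "t2 n y' = 1"
    and z: "z \<in> carrier_vec (2*n+2)" "q2 n z = 0" "t2 n z = 1"
    using yQ y'Q zQ by (auto simp: Q_points_def)
  have a: "y - z \<in> carrier_vec (2*n+2)" and b: "z - y' \<in> carrier_vec (2*n+2)"
    using y z y' by auto
  have qa: "q2 n (y - z) \<noteq> 0" and qb: "q2 n (z - y') \<noteq> 0"
    using y z y' yz y'z by (auto simp: q2_diff polar_sym[of n z])
  have "polar n (one_vec n) (v - w) = 0" if "v \<in> Q_points n" "w \<in> Q_points n" for v w
  proof -
    have "v \<in> carrier_vec (2*n+2)" "w \<in> carrier_vec (2*n+2)"
      using that by (auto simp: Q_points_def)
    then have "polar n (one_vec n) (v - w) = t2 n v - t2 n w"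
      by (simp add: polar_sym[of n "one_vec n"] polar_one_vec t2_def algebra_simps)
    also have "\<dots> = 0"
      using that by (simp add: Q_points_def)
    finally show ?thesis .
  qed
  with a b qa qb yQ y'Q zQ show "double_reflection_mat n (y - z) (z - y') \<in> Stab_one n"
    using Q_points_diffs_not_parallel[OF yQ y'Q zQ \<open>y \<noteq> y'\<close> yz y'z]
    by (intro double_reflection_mat_in_Stab_one)
  show "double_reflection_mat n (y - z) (z - y') *\<^sub>v y = y'"
    using y z y' qa qb
    by (simp add: double_reflection_mat_mult_vec[OF a b y(1)] reflection_diff)
qed

theorem proposition2p12:
  fixes n :: nat
  assumes "CHAR('k::alg_closed_field) > 0"
    and "n \<ge> 1"
  shows "\<forall>y \<in> (Q_points n :: 'k vec set). \<forall>y' \<in> Q_points n.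
           \<exists>h \<in> Stab_one n. h *\<^sub>v y = y'"
proof (intro ballI)
  fix y y' :: "'k vec"
  assume y: "y \<in> Q_points n" and y': "y' \<in> Q_points n"
  show "\<exists>h \<in> Stab_one n. h *\<^sub>v y = y'"
  proof (cases "y = y'")
    case True
    with y have "1\<^sub>m (2*n+2) *\<^sub>v y = y'"
      by (simp add: Q_points_def)
    with one_mat_in_Stab_one show ?thesis
      by blast
  next
    case False
    obtain z where "z \<in> Q_points n" "polar n y z \<noteq> 0" "polar n y' z \<noteq> 0"
      using exists_Q_point_polar_nonzero[OF \<open>n \<ge> 1\<close>] y y' by (auto simp: Q_points_def)
    with y y' False show ?thesis
      using double_reflection_mat_connects_Q_points by blast
  qed
qed

end
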